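(* Let $\alpha<\beta$ with $\alpha+\beta>0$. As $\tau\to\infty$: (i) $\lim \tau I_2=\int_{-\alpha}^{\beta}\frac{1}{\sqrt{\zeta^2+4}}\sqrt{\frac{\alpha+\zeta}{\beta-\zeta}}\,d\zeta$ and $\lim\tau J_2=\int_{-\alpha}^{\beta}\frac{1}{\sqrt{\zeta^2+4}}\sqrt{\frac{\beta-\zeta}{\alpha+\zeta}}\,d\zeta$, and $\lim_{\tau\to\infty}\tau I_2<\lim_{\tau\to\infty}\tau J_2$; (ii) $\lim\tau(I_1-J_1)=-\int_{-\infty}^{-\alpha}\frac{\alpha+\beta}{\sqrt{\zeta^2+4}\sqrt{\beta-\zeta}\sqrt{-\alpha-\zeta}}\,d\zeta$ and $\lim\tau(I_3-J_3)=\int_{\beta}^{\infty}\frac{\alpha+\beta}{\sqrt{\zeta^2+4}\sqrt{\zeta-\beta}\sqrt{\zeta+\alpha}}\,d\zeta$, both finite and nonzero; (iii) $\tau(J_1+J_3)\to+\infty$.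
   Context: For real $\alpha,\beta,\tau$ with $-\tau<-\alpha<\beta<\tau$ put $g_1(\zeta)=|\zeta+\alpha|^{1/2}|\zeta-\beta|^{-1/2}(\tau^2-\zeta^2)^{-1/2}(\zeta^2+4)^{-1/2}$ and $g_2(\zeta)=|\zeta+\alpha|^{-1/2}|\zeta-\beta|^{1/2}(\tau^2-\zeta^2)^{-1/2}(\zeta^2+4)^{-1/2}$, and $I_1=\int_{-\tau}^{-\alpha}g_1$, $I_2=\int_{-\alpha}^{\beta}g_1$, $I_3=\int_{\beta}^{\tau}g_1$, $J_1,J_2,J_3$ likewise with $g_2$ (convergent improper integrals). Under $\alpha=a-1/a$, $\beta=b-1/b$, $\tau=t-1/t$ these coincide with the period integrals of the surfaces in class $\mathcal O$ with parameters $a,b,t$. *)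

theory Defs
  imports "HOL-Analysis.Analysis"
begin

text \<open>Integrands (the powers 1/2 and -1/2 written via sqrt; the value at the
finitely many singular points is irrelevant for the integrals).\<close>

definition g1 :: "real \<Rightarrow> real \<Rightarrow> real \<Rightarrow> real \<Rightarrow> real" where
  "g1 \<alpha> \<beta> \<tau> \<zeta> = sqrt \<bar>\<zeta> + \<alpha>\<bar> / (sqrt \<bar>\<zeta> - \<beta>\<bar> * sqrt (\<tau>\<^sup>2 - \<zeta>\<^sup>2) * sqrt (\<zeta>\<^sup>2 + 4))"

definition g2 :: "real \<Rightarrow> real \<Rightarrow> real \<Rightarrow> real \<Rightarrow> real" where
  "g2 \<alpha> \<beta> \<tau> \<zeta> = sqrt \<bar>\<zeta> - \<beta>\<bar> / (sqrt \<bar>\<zeta> + \<alpha>\<bar> * sqrt (\<tau>\<^sup>2 - \<zeta>\<^sup>2) * sqrt (\<zeta>\<^sup>2 + 4))"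

text \<open>The (convergent improper) integrals, as Henstock--Kurzweil integrals over the
closed intervals; the integrands are nonnegative with integrable singularities, so
these agree with the improper Riemann integrals.\<close>

definition I1 :: "real \<Rightarrow> real \<Rightarrow> real \<Rightarrow> real" where
  "I1 \<alpha> \<beta> \<tau> = integral {-\<tau>..-\<alpha>} (g1 \<alpha> \<beta> \<tau>)"
definition I2 :: "real \<Rightarrow> real \<Rightarrow> real \<Rightarrow> real" where
  "I2 \<alpha> \<beta> \<tau> = integral {-\<alpha>..\<beta>} (g1 \<alpha> \<beta> \<tau>)"
definition I3 :: "real \<Rightarrow> real \<Rightarrow> real \<Rightarrow> real" where
  "I3 \<alpha> \<beta> \<tau> = integral {\<beta>..\<tau>} (g1 \<alpha> \<beta> \<tau>)"
definition J1 :: "real \<Rightarrow> real \<Rightarrow> real \<Rightarrow> real" where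
  "J1 \<alpha> \<beta> \<tau> = integral {-\<tau>..-\<alpha>} (g2 \<alpha> \<beta> \<tau>)"
definition J2 :: "real \<Rightarrow> real \<Rightarrow> real \<Rightarrow> real" where
  "J2 \<alpha> \<beta> \<tau> = integral {-\<alpha>..\<beta>} (g2 \<alpha> \<beta> \<tau>)"
definition J3 :: "real \<Rightarrow> real \<Rightarrow> real \<Rightarrow> real" where
  "J3 \<alpha> \<beta> \<tau> = integral {\<beta>..\<tau>} (g2 \<alpha> \<beta> \<tau>)"

end

theory Submission
  imports Defs "HOL-Real_Asymp.Real_Asymp"
begin

text \<open>
  The reflection \<open>\<zeta> \<mapsto> -\<zeta>\<close> exchanges \<open>g\<^sub>1\<close> and \<open>g\<^sub>2\<close> together with \<open>\<alpha>\<close> and \<open>\<beta>\<close>, so \<open>J\<^sub>2, J\<^sub>1, I\<^sub>1\<close>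
  are \<open>I\<^sub>2, I\<^sub>3, J\<^sub>3\<close> with the parameters swapped.

  On the middle interval \<open>\<tau> g\<^sub>1\<close> is the limit integrand times the weight \<open>\<tau> / sqrt (\<tau>\<^sup>2 - \<zeta>\<^sup>2)\<close>, which
  tends to \<open>1\<close> uniformly; this gives the limits in (i). Reflecting about the midpoint of
  \<open>[-\<alpha>, \<beta>]\<close> pairs each point of the left half, where the integrand of \<open>LJ - LI\<close> is positive, with a
  point farther from \<open>0\<close>, where \<open>1 / sqrt (\<zeta>\<^sup>2 + 4)\<close> is smaller; so the symmetrised integrand is
  nonnegative and \<open>LI < LJ\<close>.

  On \<open>[\<beta>, \<tau>]\<close> one has exactly \<open>\<tau> (g\<^sub>1 - g\<^sub>2) = \<tau> / sqrt (\<tau>\<^sup>2 - \<zeta>\<^sup>2) \<cdot> K\<^sub>3\<close>, because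
  \<open>(\<zeta> + \<alpha>) - (\<zeta> - \<beta>) = \<alpha> + \<beta>\<close>. Cutting at \<open>\<tau> powr (3/4)\<close>, the weight is close to \<open>1\<close> below the cut,
  and above it \<open>K\<^sub>3 = O(\<tau>\<^sup>-\<^sup>3\<^sup>/\<^sup>2)\<close> while the weight integrates to \<open>O(\<tau>)\<close>; this gives (ii). Finally
  \<open>\<tau> J\<^sub>1 = \<tau> I\<^sub>3\<close> (parameters swapped) dominates \<open>\<integral>\<^sub>\<beta>\<^sup>\<tau> 1 / sqrt (\<zeta>\<^sup>2 + 4)\<close>, which grows like \<open>ln \<tau>\<close>.
\<close>

lemma power2_plus_four_pos [simp]: "0 < (x::real)\<^sup>2 + 4"
  by (simp add: add_nonneg_pos)

lemma power2_plus_four_neq_zero [simp]: "(x::real)\<^sup>2 + 4 \<noteq> 0"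
  using power2_plus_four_pos[of x] by linarith

lemma sqrt_ratio_le_swap:
  fixes p q :: real
  assumes "0 < p" "p \<le> q"
  shows "sqrt (p / q) \<le> sqrt (q / p)"
  using assms mult_mono[of p q p q] by (intro real_sqrt_le_mono) (simp add: divide_simps)

lemma sqrt_ratio_less_swap:
  fixes p q :: real
  assumes "0 < p" "p < q"
  shows "sqrt (p / q) < sqrt (q / p)"
  using assms mult_strict_mono[of p q p q] by (intro real_sqrt_less_mono) (simp add: divide_simps)

lemma inverse_sqrt_plus_four_antimono:
  fixes x y :: real
  shows "x\<^sup>2 \<le> y\<^sup>2 \<Longrightarrow> 1 / sqrt (y\<^sup>2 + 4) \<le> 1 / sqrt (x\<^sup>2 + 4)"
  by (intro divide_left_mono) (auto intro!: mult_pos_pos)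

lemma inverse_sqrt_plus_four_strict_antimono:
  fixes x y :: real
  shows "x\<^sup>2 < y\<^sup>2 \<Longrightarrow> 1 / sqrt (y\<^sup>2 + 4) < 1 / sqrt (x\<^sup>2 + 4)"
  by (intro divide_strict_left_mono) (auto intro!: mult_pos_pos)

lemma one_le_tau_weight:
  fixes t x :: real
  assumes "\<bar>x\<bar> < t"
  shows "1 \<le> t / sqrt (t\<^sup>2 - x\<^sup>2)"
proof -
  have "\<bar>x\<bar>\<^sup>2 < t\<^sup>2" using assms by (intro power_strict_mono) auto
  then have "x\<^sup>2 < t\<^sup>2" by simp
  then have "0 < sqrt (t\<^sup>2 - x\<^sup>2)" "sqrt (t\<^sup>2 - x\<^sup>2) \<le> t"
    using assms real_sqrt_le_mono[of "t\<^sup>2 - x\<^sup>2" "t\<^sup>2"] by auto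
  then show ?thesis by simp
qed

lemma tau_weight_le_of_abs_le:
  fixes m t x :: real
  assumes "\<bar>x\<bar> \<le> m" "m < t"
  shows "t / sqrt (t\<^sup>2 - x\<^sup>2) \<le> t / sqrt (t\<^sup>2 - m\<^sup>2)"
proof -
  have "x\<^sup>2 \<le> m\<^sup>2" "m\<^sup>2 < t\<^sup>2"
    using assms abs_le_square_iff[of x m] by (auto intro: power_strict_mono)
  then show ?thesis
    using assms by (intro divide_left_mono) auto
qed

lemma tau_weight_le_inverse_sqrt:
  fixes t x :: real
  assumes "0 \<le> x" "x < t"
  shows "t / sqrt (t\<^sup>2 - x\<^sup>2) \<le> sqrt t * (1 / sqrt (t - x))"
proof -
  have "x\<^sup>2 < t\<^sup>2" using assms by (intro power_strict_mono) auto
  have "sqrt (t - x) * sqrt t \<le> sqrt (t - x) * sqrt (t + x)"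
    using assms by (intro mult_left_mono) auto
  also have "\<dots> = sqrt (t\<^sup>2 - x\<^sup>2)"
    by (simp add: real_sqrt_mult[symmetric] power2_eq_square algebra_simps)
  finally have "t / sqrt (t\<^sup>2 - x\<^sup>2) \<le> t / (sqrt (t - x) * sqrt t)"
    using assms \<open>x\<^sup>2 < t\<^sup>2\<close> by (intro divide_left_mono) (auto intro!: mult_pos_pos)
  also have "\<dots> = sqrt t * (1 / sqrt (t - x))"
    using assms real_div_sqrt[of t] by (simp add: field_simps)
  finally show ?thesis .
qed

lemma integral_Icc_cong_open:
  fixes f g :: "real \<Rightarrow> 'a::banach"
  assumes "\<And>x. x \<in> {p<..<q} \<Longrightarrow> f x = g x"
  shows "integral {p..q} f = integral {p..q} g"
  unfolding integral_open_interval_real using assms by (rule integral_cong)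

lemma integrable_on_Icc_cong_open:
  fixes f g :: "real \<Rightarrow> 'a::banach"
  assumes "\<And>x. x \<in> {p<..<q} \<Longrightarrow> f x = g x" "g integrable_on {p..q}"
  shows "f integrable_on {p..q}"
proof -
  have "g integrable_on {p<..<q}"
    using assms(2) by (simp add: integrable_on_Icc_iff_Ioo)
  then have "f integrable_on {p<..<q}"
    by (rule integrable_eq) (use assms(1) in auto)
  then show ?thesis by (simp add: integrable_on_Icc_iff_Ioo)
qed

lemma integral_Icc_le_open:
  fixes f g :: "real \<Rightarrow> real"
  assumes "f integrable_on {p..q}" "g integrable_on {p..q}" "\<And>x. x \<in> {p<..<q} \<Longrightarrow> f x \<le> g x"
  shows "integral {p..q} f \<le> integral {p..q} g"
  using assms integral_le[of f "{p<..<q}" g]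
  by (simp add: integrable_on_Icc_iff_Ioo integral_open_interval_real)

lemma integrable_on_Icc_if_dominated:
  fixes f g :: "real \<Rightarrow> real"
  assumes "continuous_on {p<..<q} f" "g integrable_on {p..q}"
    and "\<And>x. x \<in> {p<..<q} \<Longrightarrow> \<bar>f x\<bar> \<le> g x"
  shows "f integrable_on {p..q}"
proof -
  have "f absolutely_integrable_on {p<..<q}"
    by (rule measurable_bounded_by_integrable_imp_absolutely_integrable[where g = g])
       (use assms in \<open>auto intro: continuous_imp_measurable_on_sets_lebesgue
                          simp: integrable_on_open_interval_real\<close>)
  then show ?thesis
    using integrable_on_open_interval_real absolutely_integrable_on_def by blast
qed

lemma integrable_on_Ici_if_dominated:
  fixes f g :: "real \<Rightarrow> real"
  assumes "continuous_on {p<..} f" "g integrable_on {p..}"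
    and "\<And>x. x \<in> {p<..} \<Longrightarrow> \<bar>f x\<bar> \<le> g x"
  shows "f integrable_on {p..}"
proof -
  have negl: "negligible (({p..} - {p<..}) \<union> ({p<..} - {p..}))"
    by (rule negligible_subset[of "{p}"]) auto
  have "g integrable_on {p<..}"
    using assms(2) integrable_spike_set_eq[OF negl] by blast
  then have "f absolutely_integrable_on {p<..}"
    by (intro measurable_bounded_by_integrable_imp_absolutely_integrable[where g = g])
       (use assms in \<open>auto intro: continuous_imp_measurable_on_sets_lebesgue\<close>)
  then show ?thesis
    using integrable_spike_set_eq[OF negl] absolutely_integrable_on_def by blast
qed

lemma has_integral_inverse_sqrt_right:
  fixes p q :: real
  assumes "p < q"
  shows "((\<lambda>x. 1 / sqrt (q - x)) has_integral 2 * sqrt (q - p)) {p..q}"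
proof -
  have "((\<lambda>x. 1 / sqrt (q - x)) has_integral (-2 * sqrt (q - q)) - (-2 * sqrt (q - p))) {p..q}"
  proof (rule fundamental_theorem_of_calculus_interior)
    fix x assume "x \<in> {p<..<q}"
    then have "((\<lambda>x. -2 * sqrt (q - x)) has_real_derivative 1 / sqrt (q - x)) (at x)"
      by (auto intro!: derivative_eq_intros simp: divide_simps)
    then show "((\<lambda>x. -2 * sqrt (q - x)) has_vector_derivative 1 / sqrt (q - x)) (at x)"
      by (simp add: has_real_derivative_iff_has_vector_derivative)
  qed (use assms in \<open>auto intro!: continuous_intros\<close>)
  then show ?thesis by simp
qed

lemma has_integral_inverse_sqrt_left:
  fixes p q :: real
  assumes "p < q"
  shows "((\<lambda>x. 1 / sqrt (x - p)) has_integral 2 * sqrt (q - p)) {p..q}"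
proof -
  have "((\<lambda>x. 1 / sqrt (x - p)) has_integral 2 * sqrt (q - p) - 2 * sqrt (p - p)) {p..q}"
  proof (rule fundamental_theorem_of_calculus_interior)
    fix x assume "x \<in> {p<..<q}"
    then have "((\<lambda>x. 2 * sqrt (x - p)) has_real_derivative 1 / sqrt (x - p)) (at x)"
      by (auto intro!: derivative_eq_intros simp: divide_simps)
    then show "((\<lambda>x. 2 * sqrt (x - p)) has_vector_derivative 1 / sqrt (x - p)) (at x)"
      by (simp add: has_real_derivative_iff_has_vector_derivative)
  qed (use assms in \<open>auto intro!: continuous_intros\<close>)
  then show ?thesis by simp
qed

lemma has_integral_inverse_sqrt_plus_four:
  fixes p q :: real
  assumes "p \<le> q"
  shows "((\<lambda>x. 1 / sqrt (x\<^sup>2 + 4)) has_integral arsinh (q / 2) - arsinh (p / 2)) {p..q}"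
proof (rule fundamental_theorem_of_calculus[OF assms])
  fix x :: real
  have "((\<lambda>x. x / 2) has_real_derivative 1 / 2) (at x within {p..q})"
    by (auto intro!: derivative_eq_intros)
  from DERIV_chain2[OF arsinh_real_has_field_derivative this]
  have "((\<lambda>x. arsinh (x / 2)) has_real_derivative 1 / sqrt ((x / 2)\<^sup>2 + 1) * (1 / 2)) (at x within {p..q})" .
  moreover have "sqrt ((x / 2)\<^sup>2 + 1) = sqrt (x\<^sup>2 + 4) / 2"
    by (simp add: power_divide real_sqrt_divide field_simps)
  ultimately have "((\<lambda>x. arsinh (x / 2)) has_real_derivative 1 / sqrt (x\<^sup>2 + 4)) (at x within {p..q})"
    by simp
  then show "((\<lambda>x. arsinh (x / 2)) has_vector_derivative 1 / sqrt (x\<^sup>2 + 4)) (at x within {p..q})"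
    by (simp add: has_real_derivative_iff_has_vector_derivative)
qed

lemma integral_pos_if_pos_on_subinterval:
  fixes f :: "real \<Rightarrow> real"
  assumes "f integrable_on S" "\<And>x. x \<in> S \<Longrightarrow> 0 \<le> f x"
    and "c < d" "{c..d} \<subseteq> S" "continuous_on {c..d} f" "x0 \<in> {c..d}" "0 < f x0"
  shows "0 < integral S f"
proof -
  have f_cd: "f integrable_on {c..d}"
    using assms(5) integrable_continuous_interval by blast
  have "integral {c..d} f \<noteq> 0"
    using integral_eq_0_iff[of c d f] assms by fastforce
  moreover have "0 \<le> integral {c..d} f"
    using f_cd assms(2,4) by (intro integral_nonneg) auto
  moreover have "integral {c..d} f \<le> integral S f"
    using f_cd assms(1,2,4) by (intro integral_subset_le) auto
  ultimately show ?thesis by linarith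
qed

lemma integral_reflect_Icc:
  fixes f :: "real \<Rightarrow> real"
  assumes "f absolutely_integrable_on {p..q}"
  shows "(\<lambda>x. f (p + q - x)) absolutely_integrable_on {p..q}
    \<and> integral {p..q} (\<lambda>x. f (p + q - x)) = integral {p..q} f"
proof -
  have "(\<lambda>x. p + q - x) ` {p..q} = {p..q}"
    by (force simp: image_iff intro: bexI[where x = "p + q - _"])
  moreover have "(\<lambda>x. \<bar>-1\<bar> * f (p + q - x)) absolutely_integrable_on {p..q}
      \<and> integral {p..q} (\<lambda>x. \<bar>-1\<bar> * f (p + q - x)) = integral {p..q} f
    \<longleftrightarrow> f absolutely_integrable_on ((\<lambda>x. p + q - x) ` {p..q})
      \<and> integral ((\<lambda>x. p + q - x) ` {p..q}) f = integral {p..q} f"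
    by (rule has_absolute_integral_change_of_variables_1') (auto intro!: derivative_eq_intros inj_onI)
  ultimately show ?thesis using assms by simp
qed

lemma integral_reflect_Ici:
  fixes f :: "real \<Rightarrow> real"
  assumes "f absolutely_integrable_on {a..}"
  shows "(\<lambda>x. f (- x)) absolutely_integrable_on {..-a}
    \<and> integral {..-a} (\<lambda>x. f (- x)) = integral {a..} f"
proof -
  have "uminus ` {..-a} = {a..}"
    by (force simp: image_iff intro: bexI[where x = "- _"])
  moreover have "(\<lambda>x. \<bar>-1\<bar> * f (- x)) absolutely_integrable_on {..-a}
      \<and> integral {..-a} (\<lambda>x. \<bar>-1\<bar> * f (- x)) = integral {a..} f
    \<longleftrightarrow> f absolutely_integrable_on (uminus ` {..-a})
      \<and> integral (uminus ` {..-a}) f = integral {a..} f"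
    by (rule has_absolute_integral_change_of_variables_1') (auto intro!: derivative_eq_intros)
  ultimately show ?thesis using assms by simp
qed

section \<open>Exchanging the roles of the two parameters\<close>

lemma g2_eq_g1_reflect: "g2 a b t x = g1 b a t (- x)"
proof -
  have "\<bar>b - x\<bar> = \<bar>x - b\<bar>" "\<bar>- x - a\<bar> = \<bar>x + a\<bar>" by linarith+
  then show ?thesis unfolding g1_def g2_def by simp
qed

lemma g1_eq_g2_reflect: "g1 a b t x = g2 b a t (- x)"
  using g2_eq_g1_reflect[of b a t "- x"] by simp

lemma J2_eq_I2_swap: "J2 a b t = I2 b a t"
  using Henstock_Kurzweil_Integration.integral_reflect_real[of a "- b" "g1 b a t"]
  unfolding J2_def I2_def g2_eq_g1_reflect by simp

lemma J1_eq_I3_swap: "J1 a b t = I3 b a t"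
  using Henstock_Kurzweil_Integration.integral_reflect_real[of t a "g1 b a t"]
  unfolding J1_def I3_def g2_eq_g1_reflect by simp

lemma I1_eq_J3_swap: "I1 a b t = J3 b a t"
  using Henstock_Kurzweil_Integration.integral_reflect_real[of t a "g2 b a t"]
  unfolding I1_def J3_def g1_eq_g2_reflect by simp

section \<open>The middle interval\<close>

lemma tau_g1_eq_weight_mult:
  assumes "- a < x" "x < b"
  shows "t * g1 a b t x = t / sqrt (t\<^sup>2 - x\<^sup>2) * (1 / sqrt (x\<^sup>2 + 4) * sqrt ((a + x) / (b - x)))"
  using assms unfolding g1_def by (simp add: real_sqrt_divide abs_of_pos abs_of_neg field_simps)

lemma integrable_I2_limit_integrand:
  assumes "0 < a + b"
  shows "(\<lambda>\<zeta>. 1 / sqrt (\<zeta>\<^sup>2 + 4) * sqrt ((a + \<zeta>) / (b - \<zeta>))) integrable_on {-a..b}"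
proof (rule integrable_on_Icc_if_dominated)
  show "continuous_on {-a<..<b} (\<lambda>\<zeta>. 1 / sqrt (\<zeta>\<^sup>2 + 4) * sqrt ((a + \<zeta>) / (b - \<zeta>)))"
    by (intro continuous_intros) auto
  show "(\<lambda>x. sqrt (a + b) / 2 * (1 / sqrt (b - x))) integrable_on {-a..b}"
    using assms
    by (intro has_integral_integrable[OF has_integral_mult_right[OF has_integral_inverse_sqrt_right]]) auto
next
  fix x assume x: "x \<in> {-a<..<b}"
  have "sqrt (a + x) / (sqrt (x\<^sup>2 + 4) * sqrt (b - x)) \<le> sqrt (a + b) / (2 * sqrt (b - x))"
    using x real_sqrt_le_mono[of 4 "x\<^sup>2 + 4"] by (intro frac_le mult_right_mono) auto
  then show "\<bar>1 / sqrt (x\<^sup>2 + 4) * sqrt ((a + x) / (b - x))\<bar> \<le> sqrt (a + b) / 2 * (1 / sqrt (b - x))"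
    using x by (simp add: real_sqrt_divide)
qed

lemma tau_I2_bounds:
  fixes a b t :: real
  defines "f \<equiv> \<lambda>\<zeta>. 1 / sqrt (\<zeta>\<^sup>2 + 4) * sqrt ((a + \<zeta>) / (b - \<zeta>))" and "M \<equiv> \<bar>a\<bar> + \<bar>b\<bar>"
  assumes ab_pos: "0 < a + b" and t_large: "M < t"
  shows "integral {-a..b} f \<le> t * I2 a b t \<and> t * I2 a b t \<le> t / sqrt (t\<^sup>2 - M\<^sup>2) * integral {-a..b} f"
proof -
  define w where "w = (\<lambda>x. t / sqrt (t\<^sup>2 - x\<^sup>2))"
  have f_int: "f integrable_on {-a..b}"
    unfolding f_def using ab_pos by (rule integrable_I2_limit_integrand)
  have in_range: "\<bar>x\<bar> \<le> M" "\<bar>x\<bar> < t" if "x \<in> {-a<..<b}" for x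
    using that t_large unfolding M_def by auto
  have weighted: "t * g1 a b t x = w x * f x" if "x \<in> {-a<..<b}" for x
    using that tau_g1_eq_weight_mult[of a x b t] unfolding w_def f_def by simp
  have f_nonneg: "0 \<le> f x" if "x \<in> {-a<..<b}" for x
    using that unfolding f_def by auto
  have f_le: "f x \<le> w x * f x" if "x \<in> {-a<..<b}" for x
    using mult_right_mono[OF one_le_tau_weight[OF in_range(2)] f_nonneg] that
    unfolding w_def by simp
  have le_f: "w x * f x \<le> t / sqrt (t\<^sup>2 - M\<^sup>2) * f x" if "x \<in> {-a<..<b}" for x
    using mult_right_mono[OF tau_weight_le_of_abs_le[OF in_range(1) t_large] f_nonneg] that
    unfolding w_def by simp
  have wf_int: "(\<lambda>x. w x * f x) integrable_on {-a..b}"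
  proof (rule integrable_on_Icc_if_dominated)
    have "t\<^sup>2 - x\<^sup>2 \<noteq> 0" if "x \<in> {-a<..<b}" for x
      using in_range[OF that] abs_le_square_iff[of t x] by auto
    then show "continuous_on {-a<..<b} (\<lambda>x. w x * f x)"
      unfolding w_def f_def by (intro continuous_intros) auto
    show "(\<lambda>x. t / sqrt (t\<^sup>2 - M\<^sup>2) * f x) integrable_on {-a..b}"
      using f_int by (rule integrable_on_mult_right)
    show "\<bar>w x * f x\<bar> \<le> t / sqrt (t\<^sup>2 - M\<^sup>2) * f x" if "x \<in> {-a<..<b}" for x
      using f_le[OF that] le_f[OF that] f_nonneg[OF that] by (simp add: abs_le_iff)
  qed
  have "t * I2 a b t = integral {-a..b} (\<lambda>x. w x * f x)"
    unfolding I2_def integral_mult_right[symmetric] using weighted by (rule integral_Icc_cong_open)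
  moreover have "integral {-a..b} f \<le> integral {-a..b} (\<lambda>x. w x * f x)"
    using f_int wf_int f_le by (rule integral_Icc_le_open)
  moreover have "integral {-a..b} (\<lambda>x. w x * f x) \<le> t / sqrt (t\<^sup>2 - M\<^sup>2) * integral {-a..b} f"
    using integral_Icc_le_open[OF wf_int integrable_on_mult_right[OF f_int] le_f] by simp
  ultimately show ?thesis by simp
qed

lemma tendsto_tau_I2:
  fixes a b :: real
  defines "f \<equiv> \<lambda>\<zeta>. 1 / sqrt (\<zeta>\<^sup>2 + 4) * sqrt ((a + \<zeta>) / (b - \<zeta>))"
  assumes ab_pos: "0 < a + b"
  shows "((\<lambda>t. t * I2 a b t) \<longlongrightarrow> integral {-a..b} f) at_top"
proof -
  define M where "M = \<bar>a\<bar> + \<bar>b\<bar>"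
  have "((\<lambda>t. t / sqrt (t\<^sup>2 - M\<^sup>2)) \<longlongrightarrow> 1) at_top"
    by real_asymp
  from tendsto_mult_right[OF this, of "integral {-a..b} f"]
  have upper: "((\<lambda>t. t / sqrt (t\<^sup>2 - M\<^sup>2) * integral {-a..b} f) \<longlongrightarrow> integral {-a..b} f) at_top"
    by simp
  have "\<forall>\<^sub>F t in at_top. integral {-a..b} f \<le> t * I2 a b t
      \<and> t * I2 a b t \<le> t / sqrt (t\<^sup>2 - M\<^sup>2) * integral {-a..b} f"
    using eventually_gt_at_top[of M]
    by eventually_elim (unfold f_def M_def, rule tau_I2_bounds[OF ab_pos], simp)
  then show ?thesis
    by (intro tendsto_sandwich[OF _ _ tendsto_const upper]) (auto elim: eventually_mono)
qed

lemma integrable_J2_limit_integrand: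
  assumes "0 < a + b"
  shows "(\<lambda>\<zeta>. 1 / sqrt (\<zeta>\<^sup>2 + 4) * sqrt ((b - \<zeta>) / (a + \<zeta>))) integrable_on {-a..b}"
proof -
  define f where "f = (\<lambda>\<zeta>::real. 1 / sqrt (\<zeta>\<^sup>2 + 4) * sqrt ((b + \<zeta>) / (a - \<zeta>)))"
  have "f integrable_on {-b..a}"
    unfolding f_def using assms by (intro integrable_I2_limit_integrand) simp
  then show ?thesis
    using Henstock_Kurzweil_Integration.integrable_reflect_real[where f = f and a = "- b" and b = a]
    unfolding f_def by simp
qed

lemma tendsto_tau_J2:
  assumes "0 < a + b"
  shows "((\<lambda>t. t * J2 a b t)
    \<longlongrightarrow> integral {-a..b} (\<lambda>\<zeta>. 1 / sqrt (\<zeta>\<^sup>2 + 4) * sqrt ((b - \<zeta>) / (a + \<zeta>)))) at_top"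
proof -
  define f where "f = (\<lambda>\<zeta>::real. 1 / sqrt (\<zeta>\<^sup>2 + 4) * sqrt ((b + \<zeta>) / (a - \<zeta>)))"
  have "((\<lambda>t. t * J2 a b t) \<longlongrightarrow> integral {-b..a} f) at_top"
    unfolding J2_eq_I2_swap f_def using assms by (intro tendsto_tau_I2) simp
  then show ?thesis
    using Henstock_Kurzweil_Integration.integral_reflect_real[where f = f and a = "- b" and b = a]
    unfolding f_def by simp
qed

lemma reflected_difference_nonneg:
  fixes a b x :: real
  assumes "a < b" "- a < x" "x < b"
  shows "0 \<le> (1 / sqrt (x\<^sup>2 + 4) - 1 / sqrt ((b - a - x)\<^sup>2 + 4))
    * (sqrt ((b - x) / (a + x)) - sqrt ((a + x) / (b - x)))"
proof -
  have squares: "(b - a - x)\<^sup>2 - x\<^sup>2 = (b - a) * (b - a - 2 * x)"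
    by (simp add: power2_eq_square algebra_simps)
  show ?thesis
  proof (cases "a + x \<le> b - x")
    case True
    then have "x\<^sup>2 \<le> (b - a - x)\<^sup>2"
      using squares assms mult_nonneg_nonneg[of "b - a" "b - a - 2 * x"] by linarith
    then show ?thesis
      using True assms sqrt_ratio_le_swap[of "a + x" "b - x"] inverse_sqrt_plus_four_antimono
      by (intro mult_nonneg_nonneg) auto
  next
    case False
    then have "(b - a - x)\<^sup>2 \<le> x\<^sup>2"
      using squares assms mult_pos_neg[of "b - a" "b - a - 2 * x"] by linarith
    then show ?thesis
      using False assms sqrt_ratio_le_swap[of "b - x" "a + x"] inverse_sqrt_plus_four_antimono
      by (intro mult_nonpos_nonpos) auto
  qed
qed

lemma reflected_difference_pos:
  fixes a b x :: real
  assumes "a < b" "- a < x" "a + x < b - x"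
  shows "0 < (1 / sqrt (x\<^sup>2 + 4) - 1 / sqrt ((b - a - x)\<^sup>2 + 4))
    * (sqrt ((b - x) / (a + x)) - sqrt ((a + x) / (b - x)))"
proof -
  have "(b - a - x)\<^sup>2 - x\<^sup>2 = (b - a) * (b - a - 2 * x)"
    by (simp add: power2_eq_square algebra_simps)
  then have "x\<^sup>2 < (b - a - x)\<^sup>2"
    using assms mult_pos_pos[of "b - a" "b - a - 2 * x"] by linarith
  then show ?thesis
    using assms sqrt_ratio_less_swap[of "a + x" "b - x"] inverse_sqrt_plus_four_strict_antimono
    by (intro mult_pos_pos) auto
qed

lemma integral_reflected_difference_pos:
  fixes a b :: real
  defines "E \<equiv> \<lambda>x. (1 / sqrt (x\<^sup>2 + 4) - 1 / sqrt ((b - a - x)\<^sup>2 + 4))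
    * (sqrt ((b - x) / (a + x)) - sqrt ((a + x) / (b - x)))"
  assumes "a < b" "0 < a + b" and E_int: "E integrable_on {-a..b}"
  shows "0 < integral {-a..b} E"
proof -
  define c d where "c = - a + (a + b) / 8" and "d = - a + (a + b) / 4"
  have cd: "- a < c" "c < d" "a + c < b - c" "a + d < b - d"
    using assms unfolding c_def d_def by (auto simp: field_simps)
  have "0 < integral {-a<..<b} E"
  proof (rule integral_pos_if_pos_on_subinterval)
    show "E integrable_on {-a<..<b}"
      using E_int by (simp add: integrable_on_Icc_iff_Ioo)
    show "0 \<le> E x" if "x \<in> {-a<..<b}" for x
      unfolding E_def using that assms by (intro reflected_difference_nonneg) auto
    show "{c..d} \<subseteq> {-a<..<b}" using cd by auto
    show "continuous_on {c..d} E"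
      unfolding E_def using cd by (intro continuous_intros) auto
    show "0 < E c"
      unfolding E_def using cd assms by (intro reflected_difference_pos) simp_all
  qed (use cd in auto)
  then show ?thesis by (simp add: integral_open_interval_real)
qed

lemma I2_limit_less_J2_limit:
  fixes a b :: real
  assumes "a < b" "0 < a + b"
  shows "integral {-a..b} (\<lambda>\<zeta>. 1 / sqrt (\<zeta>\<^sup>2 + 4) * sqrt ((a + \<zeta>) / (b - \<zeta>)))
    < integral {-a..b} (\<lambda>\<zeta>. 1 / sqrt (\<zeta>\<^sup>2 + 4) * sqrt ((b - \<zeta>) / (a + \<zeta>)))"
proof -
  define fI where "fI = (\<lambda>\<zeta>::real. 1 / sqrt (\<zeta>\<^sup>2 + 4) * sqrt ((a + \<zeta>) / (b - \<zeta>)))"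
  define fJ where "fJ = (\<lambda>\<zeta>::real. 1 / sqrt (\<zeta>\<^sup>2 + 4) * sqrt ((b - \<zeta>) / (a + \<zeta>)))"
  define D where "D x = fJ x - fI x" for x
  have fI_int: "fI integrable_on {-a..b}" and fJ_int: "fJ integrable_on {-a..b}"
    unfolding fI_def fJ_def using assms(2)
    by (rule integrable_I2_limit_integrand, rule integrable_J2_limit_integrand)
  then have D_int: "D integrable_on {-a..b}"
    unfolding D_def[abs_def] by (intro integrable_diff)
  have "D absolutely_integrable_on {-a..b}"
    unfolding D_def[abs_def] using fI_int fJ_int
    by (intro set_integral_diff(1) nonnegative_absolutely_integrable_1) (auto simp: fI_def fJ_def)
  from integral_reflect_Icc[OF this]
  have D_reflect: "(\<lambda>x. D (- a + b - x)) integrable_on {-a..b}"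
      "integral {-a..b} (\<lambda>x. D (- a + b - x)) = integral {-a..b} D"
    using absolutely_integrable_on_def by blast+
  \<comment> \<open>Symmetrising about the midpoint of the interval makes the integrand nonnegative.\<close>
  have symmetrised: "D x + D (- a + b - x) = (1 / sqrt (x\<^sup>2 + 4) - 1 / sqrt ((b - a - x)\<^sup>2 + 4))
      * (sqrt ((b - x) / (a + x)) - sqrt ((a + x) / (b - x)))" for x
    unfolding D_def fI_def fJ_def by (simp add: algebra_simps diff_divide_distrib)
  have "0 < integral {-a..b} (\<lambda>x. D x + D (- a + b - x))"
    unfolding symmetrised using assms integrable_add[OF D_int D_reflect(1)]
    by (intro integral_reflected_difference_pos) (simp_all only: symmetrised)
  then have "0 < integral {-a..b} D"
    using integral_add[OF D_int D_reflect(1)] D_reflect(2) by simp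
  then show ?thesis
    using integral_diff[OF fJ_int fI_int] unfolding D_def[abs_def] fI_def fJ_def by simp
qed

section \<open>The tail kernel\<close>

text \<open>\<open>K\<^sub>3 = tail_kernel \<alpha> \<beta>\<close> and \<open>K\<^sub>1 \<zeta> = tail_kernel \<beta> \<alpha> (-\<zeta>)\<close>.\<close>

definition tail_kernel :: "real \<Rightarrow> real \<Rightarrow> real \<Rightarrow> real" where
  "tail_kernel a b \<zeta> = (a + b) / (sqrt (\<zeta>\<^sup>2 + 4) * sqrt (\<zeta> - b) * sqrt (\<zeta> + a))"

lemma tail_kernel_nonneg: "0 < a + b \<Longrightarrow> b \<le> x \<Longrightarrow> 0 \<le> tail_kernel a b x"
  unfolding tail_kernel_def by (intro divide_nonneg_nonneg mult_nonneg_nonneg) auto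

lemma continuous_on_tail_kernel: "0 < a + b \<Longrightarrow> continuous_on {b<..} (tail_kernel a b)"
  unfolding tail_kernel_def by (intro continuous_intros) auto

lemma tail_kernel_le_inverse_sqrt:
  assumes "0 < a + b" "b < x"
  shows "tail_kernel a b x \<le> sqrt (a + b) / 2 * (1 / sqrt (x - b))"
proof -
  have "2 * sqrt (x - b) * sqrt (a + b) \<le> sqrt (x\<^sup>2 + 4) * sqrt (x - b) * sqrt (x + a)"
    using assms real_sqrt_le_mono[of 4 "x\<^sup>2 + 4"] by (intro mult_mono) auto
  then have "tail_kernel a b x \<le> (a + b) / (2 * sqrt (x - b) * sqrt (a + b))"
    unfolding tail_kernel_def using assms by (intro divide_left_mono) (auto intro!: mult_pos_pos)
  also have "\<dots> = sqrt (a + b) / 2 * (1 / sqrt (x - b))"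
    using real_div_sqrt[of "a + b"] assms by (simp add: field_simps)
  finally show ?thesis .
qed

lemma tail_kernel_le_inverse_square:
  assumes "0 < a + b" "2 * (\<bar>a\<bar> + \<bar>b\<bar>) \<le> x"
  shows "tail_kernel a b x \<le> 2 * (a + b) / x\<^sup>2"
proof -
  have x_pos: "0 < x" and half: "x / 2 \<le> x - b" "x / 2 \<le> x + a"
    using assms by auto
  have "(x / 2) * (x / 2) \<le> (x - b) * (x + a)"
    by (rule mult_mono) (use half x_pos in auto)
  then have "(x / 2)\<^sup>2 \<le> (x - b) * (x + a)"
    by (simp add: power2_eq_square)
  then have "x / 2 \<le> sqrt (x - b) * sqrt (x + a)"
    by (metis real_le_rsqrt real_sqrt_mult)
  moreover have "x \<le> sqrt (x\<^sup>2 + 4)"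
    using real_sqrt_le_mono[of "x\<^sup>2" "x\<^sup>2 + 4"] x_pos by simp
  ultimately have "x * (x / 2) \<le> sqrt (x\<^sup>2 + 4) * (sqrt (x - b) * sqrt (x + a))"
    using x_pos by (intro mult_mono) auto
  then have "tail_kernel a b x \<le> (a + b) / (x * (x / 2))"
    unfolding tail_kernel_def using assms x_pos
    by (intro divide_left_mono) (auto simp: mult.assoc)
  then show ?thesis by (simp add: power2_eq_square algebra_simps)
qed

lemma tail_kernel_integrable_on_Icc:
  assumes "0 < a + b" "b < q"
  shows "tail_kernel a b integrable_on {b..q}"
proof (rule integrable_on_Icc_if_dominated)
  show "continuous_on {b<..<q} (tail_kernel a b)"
    using continuous_on_tail_kernel[OF assms(1)] by (rule continuous_on_subset) auto
  show "(\<lambda>x. sqrt (a + b) / 2 * (1 / sqrt (x - b))) integrable_on {b..q}"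
    using has_integral_mult_right[OF has_integral_inverse_sqrt_left[OF assms(2)]] by blast
  show "\<bar>tail_kernel a b x\<bar> \<le> sqrt (a + b) / 2 * (1 / sqrt (x - b))" if "x \<in> {b<..<q}" for x
    using that tail_kernel_le_inverse_sqrt[OF assms(1), of x] tail_kernel_nonneg[OF assms(1), of x]
    by simp
qed

lemma tail_kernel_tail_estimate:
  assumes "0 < a + b" "2 * (\<bar>a\<bar> + \<bar>b\<bar>) \<le> q"
  shows "tail_kernel a b integrable_on {q..} \<and> integral {q..} (tail_kernel a b) \<le> 2 * (a + b) / q"
proof -
  have q_pos: "0 < q" and b_less: "b < q" using assms by auto
  have major: "((\<lambda>x. 2 * (a + b) / x\<^sup>2) has_integral 2 * (a + b) / q) {q..}"
    using has_integral_mult_right[OF has_integral_inverse_power_to_inf[of 2 q], of "2 * (a + b)"]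
      q_pos by (simp add: divide_simps)
  have bound: "\<bar>tail_kernel a b x\<bar> \<le> 2 * (a + b) / x\<^sup>2" if "q \<le> x" for x
    using that assms(2) b_less tail_kernel_le_inverse_square[OF assms(1), of x]
      tail_kernel_nonneg[OF assms(1), of x] by simp
  have integrable: "tail_kernel a b integrable_on {q..}"
  proof (rule integrable_on_Ici_if_dominated[where g = "\<lambda>x. 2 * (a + b) / x\<^sup>2"])
    show "continuous_on {q<..} (tail_kernel a b)"
      using continuous_on_tail_kernel[OF assms(1)] by (rule continuous_on_subset) (use b_less in auto)
  qed (use major bound in auto)
  have "integral {q..} (tail_kernel a b) \<le> integral {q..} (\<lambda>x. 2 * (a + b) / x\<^sup>2)"
    using integrable major bound abs_le_D1 by (intro integral_le) auto
  then show ?thesis using integrable integral_unique[OF major] by simp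
qed

lemma tail_kernel_integral_split:
  assumes "0 < a + b" "2 * (\<bar>a\<bar> + \<bar>b\<bar>) \<le> q"
  shows "tail_kernel a b integrable_on {b..}"
    and "integral {b..} (tail_kernel a b) = integral {b..q} (tail_kernel a b) + integral {q..} (tail_kernel a b)"
proof -
  have "b < q" using assms by auto
  have negl: "negligible ({b..q} \<inter> {q..})"
    by (rule negligible_subset[of "{q}"]) auto
  have split: "{b..} = {b..q} \<union> {q..}" using \<open>b < q\<close> by auto
  show "tail_kernel a b integrable_on {b..}"
    using integrable_Un[OF negl tail_kernel_integrable_on_Icc[OF assms(1) \<open>b < q\<close>]]
      tail_kernel_tail_estimate[OF assms] split by auto
  show "integral {b..} (tail_kernel a b) = integral {b..q} (tail_kernel a b) + integral {q..} (tail_kernel a b)"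
    using integral_Un[OF tail_kernel_integrable_on_Icc[OF assms(1) \<open>b < q\<close>] _ negl]
      tail_kernel_tail_estimate[OF assms] split by auto
qed

lemma tail_kernel_integrable: "0 < a + b \<Longrightarrow> tail_kernel a b integrable_on {b..}"
  using tail_kernel_integral_split(1)[OF _ order.refl] .

lemma tail_kernel_integral_Icc_le:
  assumes "0 < a + b" "b \<le> q"
  shows "integral {b..q} (tail_kernel a b) \<le> integral {b..} (tail_kernel a b)"
proof (cases "q = b")
  case True
  then show ?thesis
    using assms integral_nonneg[OF tail_kernel_integrable] tail_kernel_nonneg by auto
next
  case False
  then show ?thesis
    using assms tail_kernel_nonneg
    by (intro integral_subset_le tail_kernel_integrable_on_Icc tail_kernel_integrable) auto
qed

lemma tail_kernel_integral_Icc_ge: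
  assumes "0 < a + b" "2 * (\<bar>a\<bar> + \<bar>b\<bar>) \<le> q"
  shows "integral {b..} (tail_kernel a b) - 2 * (a + b) / q \<le> integral {b..q} (tail_kernel a b)"
  using tail_kernel_integral_split(2)[OF assms] tail_kernel_tail_estimate[OF assms] by linarith

lemma tail_kernel_integral_pos:
  assumes "0 < a + b"
  shows "0 < integral {b..} (tail_kernel a b)"
proof (rule integral_pos_if_pos_on_subinterval)
  show "continuous_on {b + 1..b + 2} (tail_kernel a b)"
    using continuous_on_tail_kernel[OF assms] by (rule continuous_on_subset) auto
  show "0 < tail_kernel a b (b + 1)"
    using assms unfolding tail_kernel_def by (auto intro!: divide_pos_pos)
qed (use assms tail_kernel_integrable tail_kernel_nonneg in auto)

lemma reflected_tail_kernel:
  assumes "0 < a + b"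
  shows "(\<lambda>\<zeta>. tail_kernel b a (- \<zeta>)) integrable_on {..-a}
    \<and> integral {..-a} (\<lambda>\<zeta>. tail_kernel b a (- \<zeta>)) = integral {a..} (tail_kernel b a)"
proof -
  have "tail_kernel b a absolutely_integrable_on {a..}"
    using assms tail_kernel_integrable[of b a] tail_kernel_nonneg[of b a]
    by (intro nonnegative_absolutely_integrable_1) auto
  then show ?thesis
    using integral_reflect_Ici absolutely_integrable_on_def by blast
qed

section \<open>The outer intervals\<close>

lemma g1_eq_g2_plus_tail_kernel:
  assumes "0 < a + b" "b < x"
  shows "g1 a b t x = g2 a b t x + tail_kernel a b x / sqrt (t\<^sup>2 - x\<^sup>2)"
proof -
  define A B S U where "A = sqrt (x + a)" and "B = sqrt (x - b)"
    and "S = sqrt (t\<^sup>2 - x\<^sup>2)" and "U = sqrt (x\<^sup>2 + 4)"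
  have pos: "0 < A" "0 < B" "0 < U"
    using assms unfolding A_def B_def U_def by auto
  have "a + b = A * A - B * B"
    using assms unfolding A_def B_def by simp
  moreover have "g1 a b t x = A / (B * S * U)" "g2 a b t x = B / (A * S * U)"
    using assms unfolding g1_def g2_def A_def B_def S_def U_def by (simp_all add: add.commute)
  moreover have "tail_kernel a b x = (a + b) / (U * B * A)"
    unfolding tail_kernel_def A_def B_def U_def by simp
  moreover have "A / (B * S * U) = B / (A * S * U) + (A * A - B * B) / (U * B * A) / S"
    using pos by (cases "S = 0") (simp_all add: field_simps)
  ultimately show ?thesis by (simp add: S_def)
qed

lemma g2_le_inverse_sqrt:
  assumes "0 < a + b" "b < x" "x < t" "0 < t + b"
  shows "0 \<le> g2 a b t x \<and> g2 a b t x \<le> 1 / (2 * sqrt (t + b)) * (1 / sqrt (t - x))"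
proof -
  have "sqrt (t\<^sup>2 - x\<^sup>2) = sqrt (t - x) * sqrt (t + x)"
    by (simp add: real_sqrt_mult[symmetric] power2_eq_square algebra_simps)
  then have g2_eq: "g2 a b t x
      = (sqrt (x - b) / sqrt (x + a)) / (sqrt (t - x) * sqrt (t + x) * sqrt (x\<^sup>2 + 4))"
    using assms unfolding g2_def by (simp add: abs_of_pos add.commute mult.assoc)
  have ratio: "0 \<le> sqrt (x - b) / sqrt (x + a)" "sqrt (x - b) / sqrt (x + a) \<le> 1"
    using assms by auto
  have "sqrt (t + b) * 2 \<le> sqrt (t + x) * sqrt (x\<^sup>2 + 4)"
    using assms real_sqrt_le_mono[of 4 "x\<^sup>2 + 4"] by (intro mult_mono) auto
  then have "2 * sqrt (t + b) * sqrt (t - x) \<le> sqrt (t - x) * sqrt (t + x) * sqrt (x\<^sup>2 + 4)"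
    using mult_left_mono[of _ _ "sqrt (t - x)"] assms by (simp add: ac_simps)
  then have "g2 a b t x \<le> 1 / (2 * sqrt (t + b) * sqrt (t - x))"
    unfolding g2_eq using ratio assms by (intro frac_le) auto
  then show ?thesis
    unfolding g2_eq using ratio assms by simp
qed

lemma inverse_sqrt_le_tau_g1:
  assumes "0 < a + b" "b < x" "\<bar>x\<bar> < t"
  shows "1 / sqrt (x\<^sup>2 + 4) \<le> t * g1 a b t x"
proof -
  have ratio: "1 \<le> sqrt (x + a) / sqrt (x - b)"
    using assms by (simp add: le_divide_eq)
  have eq: "t * g1 a b t x
      = sqrt (x + a) / sqrt (x - b) * (t / sqrt (t\<^sup>2 - x\<^sup>2)) * (1 / sqrt (x\<^sup>2 + 4))"
    using assms unfolding g1_def by (simp add: abs_of_pos add.commute)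
  have "1 * 1 * (1 / sqrt (x\<^sup>2 + 4))
      \<le> sqrt (x + a) / sqrt (x - b) * (t / sqrt (t\<^sup>2 - x\<^sup>2)) * (1 / sqrt (x\<^sup>2 + 4))"
    using ratio one_le_tau_weight[OF assms(3)] by (intro mult_right_mono mult_mono) auto
  then show ?thesis unfolding eq by simp
qed

lemma weighted_tail_kernel_le:
  assumes "0 < a + b" "2 * (\<bar>a\<bar> + \<bar>b\<bar>) \<le> m" "m < t" "b < x" "x < t"
  shows "t / sqrt (t\<^sup>2 - x\<^sup>2) * tail_kernel a b x
    \<le> t / sqrt (t\<^sup>2 - m\<^sup>2) * tail_kernel a b x + 2 * (a + b) / m\<^sup>2 * sqrt t * (1 / sqrt (t - x))"
proof (cases "x \<le> m")
  case True
  then have "\<bar>x\<bar> \<le> m" using assms by auto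
  then have "t / sqrt (t\<^sup>2 - x\<^sup>2) * tail_kernel a b x \<le> t / sqrt (t\<^sup>2 - m\<^sup>2) * tail_kernel a b x"
    using assms tail_kernel_nonneg[OF assms(1), of x]
    by (intro mult_right_mono tau_weight_le_of_abs_le) auto
  moreover have "0 \<le> 2 * (a + b) / m\<^sup>2 * sqrt t * (1 / sqrt (t - x))"
    using assms by simp
  ultimately show ?thesis by linarith
next
  case False
  have "tail_kernel a b x \<le> 2 * (a + b) / x\<^sup>2"
    using False assms by (intro tail_kernel_le_inverse_square) auto
  also have "\<dots> \<le> 2 * (a + b) / m\<^sup>2"
    using False assms by (intro divide_left_mono power_mono) auto
  finally have "t / sqrt (t\<^sup>2 - x\<^sup>2) * tail_kernel a b x \<le> sqrt t * (1 / sqrt (t - x)) * (2 * (a + b) / m\<^sup>2)"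
    using False assms tail_kernel_nonneg[OF assms(1), of x]
    by (intro mult_mono tau_weight_le_inverse_sqrt) auto
  moreover have "0 \<le> t / sqrt (t\<^sup>2 - m\<^sup>2) * tail_kernel a b x"
    using assms tail_kernel_nonneg[OF assms(1), of x] by auto
  ultimately show ?thesis by (simp add: ac_simps)
qed

lemma integrable_weighted_tail_kernel:
  assumes "0 < a + b" "2 * (\<bar>a\<bar> + \<bar>b\<bar>) < t"
  shows "(\<lambda>x. t / sqrt (t\<^sup>2 - x\<^sup>2) * tail_kernel a b x) integrable_on {b..t}"
proof (rule integrable_on_Icc_if_dominated)
  define m where "m = 2 * (\<bar>a\<bar> + \<bar>b\<bar>)"
  have "b < t" "m < t" using assms unfolding m_def by auto
  have "t\<^sup>2 - x\<^sup>2 \<noteq> 0" if "x \<in> {b<..<t}" for x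
    using that assms abs_le_square_iff[of t x] by auto
  moreover have "continuous_on {b<..<t} (tail_kernel a b)"
    by (rule continuous_on_subset[OF continuous_on_tail_kernel[OF assms(1)]]) auto
  ultimately show "continuous_on {b<..<t} (\<lambda>x. t / sqrt (t\<^sup>2 - x\<^sup>2) * tail_kernel a b x)"
    by (intro continuous_intros) auto
  show "(\<lambda>x. t / sqrt (t\<^sup>2 - m\<^sup>2) * tail_kernel a b x + 2 * (a + b) / m\<^sup>2 * sqrt t * (1 / sqrt (t - x)))
      integrable_on {b..t}"
    using tail_kernel_integrable_on_Icc[OF assms(1) \<open>b < t\<close>] has_integral_inverse_sqrt_right[OF \<open>b < t\<close>]
    by (intro integrable_add integrable_on_mult_right has_integral_integrable) auto
  show "\<bar>t / sqrt (t\<^sup>2 - x\<^sup>2) * tail_kernel a b x\<bar>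
      \<le> t / sqrt (t\<^sup>2 - m\<^sup>2) * tail_kernel a b x + 2 * (a + b) / m\<^sup>2 * sqrt t * (1 / sqrt (t - x))"
    if "x \<in> {b<..<t}" for x
  proof -
    have "\<bar>x\<bar> < t" using that assms by auto
    then have "\<bar>x\<bar>\<^sup>2 < t\<^sup>2" by (intro power_strict_mono) auto
    then show ?thesis
      using that assms weighted_tail_kernel_le[OF assms(1), of m t x] tail_kernel_nonneg[OF assms(1), of x]
      unfolding m_def by (simp add: abs_mult)
  qed
qed

lemma integrable_g2_tail:
  assumes "0 < a + b" "\<bar>b\<bar> < t"
  shows "g2 a b t integrable_on {b..t}"
proof (rule integrable_on_Icc_if_dominated)
  have "b < t" "0 < t + b" using assms by auto
  have "\<bar>x + a\<bar> \<noteq> 0 \<and> t\<^sup>2 - x\<^sup>2 \<noteq> 0" if "x \<in> {b<..<t}" for x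
    using that assms abs_le_square_iff[of t x] by auto
  then show "continuous_on {b<..<t} (g2 a b t)"
    unfolding g2_def by (intro continuous_intros) auto
  show "(\<lambda>x. 1 / (2 * sqrt (t + b)) * (1 / sqrt (t - x))) integrable_on {b..t}"
    using has_integral_inverse_sqrt_right[OF \<open>b < t\<close>]
    by (intro integrable_on_mult_right has_integral_integrable)
  show "\<bar>g2 a b t x\<bar> \<le> 1 / (2 * sqrt (t + b)) * (1 / sqrt (t - x))" if "x \<in> {b<..<t}" for x
    using that g2_le_inverse_sqrt[OF assms(1), of x t] \<open>0 < t + b\<close> by auto
qed

lemma tau_I3_minus_J3_eq:
  assumes "0 < a + b" "2 * (\<bar>a\<bar> + \<bar>b\<bar>) < t"
  shows "g1 a b t integrable_on {b..t}"
    and "t * (I3 a b t - J3 a b t) = integral {b..t} (\<lambda>x. t / sqrt (t\<^sup>2 - x\<^sup>2) * tail_kernel a b x)"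
proof -
  define h where "h = (\<lambda>x. t / sqrt (t\<^sup>2 - x\<^sup>2) * tail_kernel a b x)"
  have "0 < t" "\<bar>b\<bar> < t" using assms by auto
  have split: "g1 a b t x = g2 a b t x + 1 / t * h x" if "x \<in> {b<..<t}" for x
    using that \<open>0 < t\<close> g1_eq_g2_plus_tail_kernel[OF assms(1), of x t] unfolding h_def by simp
  have g2_int: "g2 a b t integrable_on {b..t}"
    using assms(1) \<open>\<bar>b\<bar> < t\<close> by (rule integrable_g2_tail)
  have h_int: "h integrable_on {b..t}"
    unfolding h_def using assms by (rule integrable_weighted_tail_kernel)
  show "g1 a b t integrable_on {b..t}"
    using split integrable_add[OF g2_int integrable_on_mult_right[OF h_int, of "1 / t"]]
    by (rule integrable_on_Icc_cong_open)
  have "I3 a b t = integral {b..t} (\<lambda>x. g2 a b t x + 1 / t * h x)"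
    unfolding I3_def by (rule integral_Icc_cong_open) (rule split)
  also have "\<dots> = J3 a b t + 1 / t * integral {b..t} h"
    unfolding J3_def using integral_add[OF g2_int integrable_on_mult_right[OF h_int, of "1 / t"]] by simp
  finally show "t * (I3 a b t - J3 a b t) = integral {b..t} h"
    using \<open>0 < t\<close> by simp
qed

lemma tau_I3_minus_J3_ge:
  assumes "0 < a + b" "2 * (\<bar>a\<bar> + \<bar>b\<bar>) < t"
  shows "integral {b..} (tail_kernel a b) - 2 * (a + b) / t \<le> t * (I3 a b t - J3 a b t)"
proof -
  have "b < t" using assms by auto
  have "integral {b..t} (tail_kernel a b)
      \<le> integral {b..t} (\<lambda>x. t / sqrt (t\<^sup>2 - x\<^sup>2) * tail_kernel a b x)"
  proof (rule integral_Icc_le_open)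
    show "tail_kernel a b integrable_on {b..t}"
      using assms(1) \<open>b < t\<close> by (rule tail_kernel_integrable_on_Icc)
    show "(\<lambda>x. t / sqrt (t\<^sup>2 - x\<^sup>2) * tail_kernel a b x) integrable_on {b..t}"
      using assms by (rule integrable_weighted_tail_kernel)
    show "tail_kernel a b x \<le> t / sqrt (t\<^sup>2 - x\<^sup>2) * tail_kernel a b x" if "x \<in> {b<..<t}" for x
      using mult_right_mono[OF one_le_tau_weight tail_kernel_nonneg[OF assms(1)], of x t x] that assms
      by auto
  qed
  moreover have "integral {b..} (tail_kernel a b) - 2 * (a + b) / t \<le> integral {b..t} (tail_kernel a b)"
    using assms by (intro tail_kernel_integral_Icc_ge) auto
  ultimately show ?thesis
    using tau_I3_minus_J3_eq(2)[OF assms] by simp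
qed

lemma tau_I3_minus_J3_le:
  assumes "0 < a + b" "2 * (\<bar>a\<bar> + \<bar>b\<bar>) \<le> m" "m < t"
  shows "t * (I3 a b t - J3 a b t)
    \<le> t / sqrt (t\<^sup>2 - m\<^sup>2) * integral {b..} (tail_kernel a b) + 4 * (a + b) / m\<^sup>2 * sqrt t * sqrt (t - b)"
proof -
  define K where "K = tail_kernel a b"
  define r where "r = t / sqrt (t\<^sup>2 - m\<^sup>2)"
  define c where "c = 2 * (a + b) / m\<^sup>2 * sqrt t"
  have "b < t" "0 \<le> r" and t_large: "2 * (\<bar>a\<bar> + \<bar>b\<bar>) < t"
    using assms unfolding r_def by auto
  have K_int: "K integrable_on {b..t}"
    unfolding K_def using assms(1) \<open>b < t\<close> by (rule tail_kernel_integrable_on_Icc)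
  have sqrt_int: "((\<lambda>x. c * (1 / sqrt (t - x))) has_integral c * (2 * sqrt (t - b))) {b..t}"
    using has_integral_inverse_sqrt_right[OF \<open>b < t\<close>] by (rule has_integral_mult_right)
  have "t * (I3 a b t - J3 a b t) = integral {b..t} (\<lambda>x. t / sqrt (t\<^sup>2 - x\<^sup>2) * K x)"
    unfolding K_def using assms(1) t_large by (rule tau_I3_minus_J3_eq)
  also have "\<dots> \<le> integral {b..t} (\<lambda>x. r * K x + c * (1 / sqrt (t - x)))"
  proof (rule integral_Icc_le_open)
    show "(\<lambda>x. t / sqrt (t\<^sup>2 - x\<^sup>2) * K x) integrable_on {b..t}"
      unfolding K_def using assms(1) t_large by (rule integrable_weighted_tail_kernel)
    show "(\<lambda>x. r * K x + c * (1 / sqrt (t - x))) integrable_on {b..t}"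
      using integrable_on_mult_right[OF K_int] has_integral_integrable[OF sqrt_int]
      by (rule integrable_add)
    show "t / sqrt (t\<^sup>2 - x\<^sup>2) * K x \<le> r * K x + c * (1 / sqrt (t - x))" if "x \<in> {b<..<t}" for x
      using that weighted_tail_kernel_le[OF assms, of x] unfolding K_def r_def c_def by simp
  qed
  also have "\<dots> = r * integral {b..t} K + c * (2 * sqrt (t - b))"
    using integral_add[OF integrable_on_mult_right[OF K_int, of r] has_integral_integrable[OF sqrt_int]]
      integral_unique[OF sqrt_int] by simp
  also have "\<dots> \<le> r * integral {b..} K + c * (2 * sqrt (t - b))"
    unfolding K_def using assms(1) \<open>b < t\<close> \<open>0 \<le> r\<close>
    by (intro add_right_mono mult_left_mono tail_kernel_integral_Icc_le) auto
  finally show ?thesis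
    unfolding r_def c_def K_def by (simp add: algebra_simps)
qed

lemma tendsto_tau_I3_minus_J3:
  assumes "0 < a + b"
  shows "((\<lambda>t. t * (I3 a b t - J3 a b t)) \<longlongrightarrow> integral {b..} (tail_kernel a b)) at_top"
proof -
  define L where "L = integral {b..} (tail_kernel a b)"
  \<comment> \<open>Any cut-off \<open>m t\<close> with \<open>m t / t \<rightarrow> 0\<close> and \<open>t / (m t)\<^sup>2 \<rightarrow> 0\<close> would do.\<close>
  define m :: "real \<Rightarrow> real" where "m t = t powr (3/4)" for t
  have "\<forall>\<^sub>F t in at_top. 2 * (\<bar>a\<bar> + \<bar>b\<bar>) \<le> m t" "\<forall>\<^sub>F t in at_top. m t < t"
    unfolding m_def by real_asymp+
  then have bounds: "\<forall>\<^sub>F t in at_top. L - 2 * (a + b) / t \<le> t * (I3 a b t - J3 a b t)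
      \<and> t * (I3 a b t - J3 a b t)
        \<le> t / sqrt (t\<^sup>2 - (m t)\<^sup>2) * L + 4 * (a + b) / (m t)\<^sup>2 * sqrt t * sqrt (t - b)"
    unfolding L_def
    by eventually_elim (intro conjI tau_I3_minus_J3_ge[OF assms] tau_I3_minus_J3_le[OF assms]; linarith)
  have "((\<lambda>t. t / sqrt (t\<^sup>2 - (m t)\<^sup>2)) \<longlongrightarrow> 1) at_top"
    unfolding m_def by real_asymp
  moreover have "((\<lambda>t. 4 * (a + b) / (m t)\<^sup>2 * sqrt t * sqrt (t - b)) \<longlongrightarrow> 0) at_top"
    unfolding m_def by real_asymp
  ultimately have upper: "((\<lambda>t. t / sqrt (t\<^sup>2 - (m t)\<^sup>2) * L
      + 4 * (a + b) / (m t)\<^sup>2 * sqrt t * sqrt (t - b)) \<longlongrightarrow> L) at_top"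
    using tendsto_add[OF tendsto_mult_right[of _ 1 at_top L]] by fastforce
  have lower: "((\<lambda>t. L - 2 * (a + b) / t) \<longlongrightarrow> L) at_top"
    by real_asymp
  show ?thesis
    unfolding L_def[symmetric]
    by (rule tendsto_sandwich[OF _ _ lower upper]) (use bounds in \<open>auto elim: eventually_mono\<close>)
qed

lemma tendsto_tau_I1_minus_J1:
  assumes "0 < a + b"
  shows "((\<lambda>t. t * (I1 a b t - J1 a b t)) \<longlongrightarrow> - integral {a..} (tail_kernel b a)) at_top"
proof -
  have "t * (I1 a b t - J1 a b t) = - (t * (I3 b a t - J3 b a t))" for t
    unfolding I1_eq_J3_swap J1_eq_I3_swap by (simp add: algebra_simps)
  then show ?thesis
    using tendsto_minus[OF tendsto_tau_I3_minus_J3[of b a]] assms by (simp add: add.commute)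
qed

lemma filterlim_tau_I3:
  assumes "0 < a + b"
  shows "filterlim (\<lambda>t. t * I3 a b t) at_top at_top"
proof (rule filterlim_at_top_mono)
  show "filterlim (\<lambda>t. arsinh (t / 2) - arsinh (b / 2)) at_top at_top"
    unfolding arsinh_real_def by real_asymp
  show "\<forall>\<^sub>F t in at_top. arsinh (t / 2) - arsinh (b / 2) \<le> t * I3 a b t"
    using eventually_gt_at_top[of "2 * (\<bar>a\<bar> + \<bar>b\<bar>)"]
  proof eventually_elim
    case (elim t)
    then have "b < t" by auto
    have "arsinh (t / 2) - arsinh (b / 2) = integral {b..t} (\<lambda>x. 1 / sqrt (x\<^sup>2 + 4))"
      using has_integral_inverse_sqrt_plus_four[of b t] \<open>b < t\<close> by (simp add: integral_unique)
    also have "\<dots> \<le> integral {b..t} (\<lambda>x. t * g1 a b t x)"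
    proof (rule integral_Icc_le_open)
      show "(\<lambda>x. 1 / sqrt (x\<^sup>2 + 4)) integrable_on {b..t}"
        using \<open>b < t\<close> by (intro has_integral_integrable[OF has_integral_inverse_sqrt_plus_four]) simp
      show "(\<lambda>x. t * g1 a b t x) integrable_on {b..t}"
        using tau_I3_minus_J3_eq(1)[OF assms elim] by (rule integrable_on_mult_right)
      show "1 / sqrt (x\<^sup>2 + 4) \<le> t * g1 a b t x" if "x \<in> {b<..<t}" for x
        using that elim by (intro inverse_sqrt_le_tau_g1[OF assms]) auto
    qed
    also have "\<dots> = t * I3 a b t"
      unfolding I3_def by simp
    finally show ?case .
  qed
qed

lemma J3_nonneg:
  assumes "0 < a + b" "\<bar>b\<bar> < t"
  shows "0 \<le> J3 a b t"
proof -
  have "integral {b..t} (\<lambda>_. 0) \<le> J3 a b t"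
    unfolding J3_def using assms g2_le_inverse_sqrt[OF assms(1)]
    by (intro integral_Icc_le_open integrable_g2_tail) auto
  then show ?thesis by simp
qed

lemma filterlim_tau_J1_plus_J3:
  assumes "0 < a + b"
  shows "filterlim (\<lambda>t. t * (J1 a b t + J3 a b t)) at_top at_top"
proof (rule filterlim_at_top_mono)
  show "filterlim (\<lambda>t. t * J1 a b t) at_top at_top"
    unfolding J1_eq_I3_swap using assms by (intro filterlim_tau_I3) simp
  show "\<forall>\<^sub>F t in at_top. t * J1 a b t \<le> t * (J1 a b t + J3 a b t)"
    using eventually_gt_at_top[of "\<bar>b\<bar>"]
    by eventually_elim (use assms J3_nonneg in \<open>simp add: algebra_simps\<close>)
qed

theorem mainTheorem8:
  fixes \<alpha> \<beta> :: real
  assumes "\<alpha> < \<beta>" and "\<alpha> + \<beta> > 0"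
  defines "LI \<equiv> integral {-\<alpha>..\<beta>} (\<lambda>\<zeta>. 1 / sqrt (\<zeta>\<^sup>2 + 4) * sqrt ((\<alpha> + \<zeta>) / (\<beta> - \<zeta>)))"
      and "LJ \<equiv> integral {-\<alpha>..\<beta>} (\<lambda>\<zeta>. 1 / sqrt (\<zeta>\<^sup>2 + 4) * sqrt ((\<beta> - \<zeta>) / (\<alpha> + \<zeta>)))"
      and "K1 \<equiv> (\<lambda>\<zeta>. (\<alpha> + \<beta>) / (sqrt (\<zeta>\<^sup>2 + 4) * sqrt (\<beta> - \<zeta>) * sqrt (-\<alpha> - \<zeta>)))"
      and "K3 \<equiv> (\<lambda>\<zeta>. (\<alpha> + \<beta>) / (sqrt (\<zeta>\<^sup>2 + 4) * sqrt (\<zeta> - \<beta>) * sqrt (\<zeta> + \<alpha>)))"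
  shows
    "(\<lambda>\<zeta>. 1 / sqrt (\<zeta>\<^sup>2 + 4) * sqrt ((\<alpha> + \<zeta>) / (\<beta> - \<zeta>))) integrable_on {-\<alpha>..\<beta>}
     \<and> (\<lambda>\<zeta>. 1 / sqrt (\<zeta>\<^sup>2 + 4) * sqrt ((\<beta> - \<zeta>) / (\<alpha> + \<zeta>))) integrable_on {-\<alpha>..\<beta>}
     \<and> ((\<lambda>\<tau>. \<tau> * I2 \<alpha> \<beta> \<tau>) \<longlongrightarrow> LI) at_top
     \<and> ((\<lambda>\<tau>. \<tau> * J2 \<alpha> \<beta> \<tau>) \<longlongrightarrow> LJ) at_top
     \<and> LI < LJ
     \<and> K1 integrable_on {..-\<alpha>} \<and> K3 integrable_on {\<beta>..}
     \<and> ((\<lambda>\<tau>. \<tau> * (I1 \<alpha> \<beta> \<tau> - J1 \<alpha> \<beta> \<tau>)) \<longlongrightarrow> - integral {..-\<alpha>} K1) at_top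
     \<and> ((\<lambda>\<tau>. \<tau> * (I3 \<alpha> \<beta> \<tau> - J3 \<alpha> \<beta> \<tau>)) \<longlongrightarrow> integral {\<beta>..} K3) at_top
     \<and> integral {..-\<alpha>} K1 \<noteq> 0 \<and> integral {\<beta>..} K3 \<noteq> 0
     \<and> filterlim (\<lambda>\<tau>. \<tau> * (J1 \<alpha> \<beta> \<tau> + J3 \<alpha> \<beta> \<tau>)) at_top at_top"
proof -
  have swapped: "0 < \<beta> + \<alpha>" using assms(2) by simp
  have K1_eq: "K1 = (\<lambda>\<zeta>. tail_kernel \<beta> \<alpha> (- \<zeta>))"
    unfolding K1_def tail_kernel_def by (simp add: fun_eq_iff ac_simps)
  have K3_eq: "K3 = tail_kernel \<alpha> \<beta>"
    unfolding K3_def tail_kernel_def by (simp add: fun_eq_iff)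
  have K1_facts: "K1 integrable_on {..-\<alpha>} \<and> integral {..-\<alpha>} K1 = integral {\<alpha>..} (tail_kernel \<beta> \<alpha>)"
    unfolding K1_eq using assms(2) by (rule reflected_tail_kernel)
  show ?thesis
    unfolding LI_def LJ_def K3_eq
    using assms K1_facts swapped
      integrable_I2_limit_integrand integrable_J2_limit_integrand tendsto_tau_I2 tendsto_tau_J2
      I2_limit_less_J2_limit tail_kernel_integrable tendsto_tau_I1_minus_J1 tendsto_tau_I3_minus_J3
      tail_kernel_integral_pos[of \<beta> \<alpha>] tail_kernel_integral_pos[of \<alpha> \<beta>] filterlim_tau_J1_plus_J3
    by auto
qed

end
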